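(* Let $m>0$ and $n\ge 0$ be integers. Then the diameter of ${\rm SR}(m,n)$ is $\min(m-1,n)$.
   Context: ${\rm SR}(m,n)$ is the graph whose vertices are the vectors in $\{0,1,2,\dots\}^m$ with coordinate sum $n$, two vertices being adjacent when they differ in precisely two coordinate positions. *)

theory Defs
  imports Main "HOL-Library.Extended_Nat"
begin

definition SR_verts :: "nat \<Rightarrow> nat \<Rightarrow> nat list set" where
  "SR_verts m n = {x. length x = m \<and> sum_list x = n}"

definition SR_adj :: "nat \<Rightarrow> nat \<Rightarrow> nat list \<Rightarrow> nat list \<Rightarrow> bool" where
  "SR_adj m n x y \<longleftrightarrow> x \<in> SR_verts m n \<and> y \<in> SR_verts m n \<and>
     card {i. i < m \<and> x ! i \<noteq> y ! i} = 2"

text \<open>Graph distance (infinity if no path): least k with a walk of length k.\<close>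
definition SR_dist :: "nat \<Rightarrow> nat \<Rightarrow> nat list \<Rightarrow> nat list \<Rightarrow> enat" where
  "SR_dist m n x y = (INF k \<in> {k. (SR_adj m n ^^ k) x y}. enat k)"

definition SR_diameter :: "nat \<Rightarrow> nat \<Rightarrow> enat" where
  "SR_diameter m n = (SUP p \<in> SR_verts m n \<times> SR_verts m n. SR_dist m n (fst p) (snd p))"

end

theory Submission
  imports Defs
begin

text \<open>Upper bound: if x \<noteq> y, some coordinate j has x_j > y_j and some i has x_i < y_i; moving
  min(x_j - y_j, y_i - x_i) from j to i is an edge that fixes at least one further coordinate and
  lowers the excess \<Sum> (x_k - y_k) \<le> n. Since the final edge fixes two coordinates, a walk of
  length at most min(m - 1, n) results.
  Lower bound: along an edge the number of nonzero entries among positions 1..m-1 grows by at most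
  one, because the two changed entries cannot both leave 0 without raising the coordinate sum.
  This separates (n,0,...,0) from (n-K,1,...,1,0,...,0) with K = min(m - 1, n) ones.\<close>

definition mismatch :: "nat \<Rightarrow> nat list \<Rightarrow> nat list \<Rightarrow> nat set" where
  "mismatch m x y = {i. i < m \<and> x ! i \<noteq> y ! i}"

definition excess :: "nat \<Rightarrow> nat list \<Rightarrow> nat list \<Rightarrow> nat" where
  "excess m x y = (\<Sum>i<m. x ! i - y ! i)"

definition nonzeros :: "nat set \<Rightarrow> nat list \<Rightarrow> nat set" where
  "nonzeros A z = {i \<in> A. z ! i \<noteq> 0}"

lemma SR_adj_iff_card_mismatch:
  "SR_adj m n x y \<longleftrightarrow> x \<in> SR_verts m n \<and> y \<in> SR_verts m n \<and> card (mismatch m x y) = 2"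
  unfolding SR_adj_def mismatch_def ..

lemma finite_mismatch [simp]: "finite (mismatch m x y)"
  unfolding mismatch_def by simp

lemma mismatch_self [simp]: "mismatch m x x = {}"
  unfolding mismatch_def by simp

lemma mismatch_eq_empty_iff:
  assumes "length x = m" "length y = m"
  shows "mismatch m x y = {} \<longleftrightarrow> x = y"
  using assms nth_equalityI[of x y] unfolding mismatch_def by auto

lemma card_mismatch_le: "card (mismatch m x y) \<le> m"
proof -
  have "card (mismatch m x y) \<le> card {..<m}"
    unfolding mismatch_def by (intro card_mono) auto
  then show ?thesis by simp
qed

lemma SR_verts_sum_nth: "x \<in> SR_verts m n \<Longrightarrow> (\<Sum>i<m. x ! i) = n"
  unfolding SR_verts_def by (auto simp: sum_list_sum_nth atLeast0LessThan)

lemma excess_le: "x \<in> SR_verts m n \<Longrightarrow> excess m x y \<le> n"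
  unfolding excess_def using sum_mono[of "{..<m}" "\<lambda>i. x ! i - y ! i" "\<lambda>i. x ! i"]
  by (simp add: SR_verts_sum_nth)

lemma sum_list_eq_obtains_nth_greater:
  fixes xs ys :: "nat list"
  assumes "length xs = length ys" "sum_list xs = sum_list ys" "xs \<noteq> ys"
  obtains j where "j < length xs" "ys ! j < xs ! j"
proof (rule ccontr)
  assume "\<not> thesis"
  then have le: "\<forall>k\<in>{..<length xs}. xs ! k \<le> ys ! k"
    using that by (meson lessThan_iff not_le_imp_less)
  obtain d where "d < length xs" "xs ! d \<noteq> ys ! d"
    using assms(1,3) nth_equalityI by metis
  with le have "(\<Sum>k<length xs. xs ! k) < (\<Sum>k<length xs. ys ! k)"
    by (intro sum_strict_mono_ex1) (auto intro!: bexI[of _ d] simp: order.strict_iff_order)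
  with assms(1,2) show False
    by (simp add: sum_list_sum_nth atLeast0LessThan)
qed

lemma sum_list_transfer:
  fixes xs :: "nat list"
  assumes "i < length xs" "j < length xs" "i \<noteq> j" "t \<le> xs ! j"
  shows "sum_list (xs[j := xs ! j - t, i := xs ! i + t]) = sum_list xs"
proof -
  have xj: "xs ! j \<le> sum_list xs"
    using assms(2) elem_le_sum_list by blast
  have "sum_list (xs[j := xs ! j - t]) = sum_list xs - t"
    using sum_list_update[of j xs] assms xj by simp
  moreover have "xs[j := xs ! j - t] ! i = xs ! i"
    using assms(3) by simp
  ultimately show ?thesis
    using sum_list_update[of i "xs[j := xs ! j - t]" "xs ! i + t"] assms xj by simp
qed

lemma SR_adj_towards:
  assumes xv: "x \<in> SR_verts m n" and yv: "y \<in> SR_verts m n" and "x \<noteq> y"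
  obtains x' where "SR_adj m n x x'"
    "card (mismatch m x' y) < card (mismatch m x y)" "excess m x' y < excess m x y"
proof -
  have lx: "length x = m" and ly: "length y = m" and s: "sum_list x = sum_list y"
    using xv yv unfolding SR_verts_def by auto
  obtain j where j: "j < m" "y ! j < x ! j"
    using sum_list_eq_obtains_nth_greater[of x y] lx ly s \<open>x \<noteq> y\<close> by auto
  obtain i where i: "i < m" "x ! i < y ! i"
    using sum_list_eq_obtains_nth_greater[of y x] lx ly s \<open>x \<noteq> y\<close> by auto
  have ij: "i \<noteq> j" using i j by auto
  define t where "t = min (x ! j - y ! j) (y ! i - x ! i)"
  have t: "0 < t" "t \<le> x ! j - y ! j" "t \<le> y ! i - x ! i"
    using i j unfolding t_def by auto
  define x' where "x' = x[j := x ! j - t, i := x ! i + t]"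
  have x'_i: "x' ! i = x ! i + t" and x'_j: "x' ! j = x ! j - t"
    unfolding x'_def using lx i j ij by auto
  have x'_other: "x' ! k = x ! k" if "k \<noteq> i" "k \<noteq> j" for k
    unfolding x'_def using that by simp
  have x'v: "x' \<in> SR_verts m n"
    using xv lx i j ij t sum_list_transfer[of i x j t]
    unfolding SR_verts_def x'_def by simp
  have "mismatch m x x' = {i, j}"
  proof (rule set_eqI)
    show "k \<in> mismatch m x x' \<longleftrightarrow> k \<in> {i, j}" for k
      unfolding mismatch_def using i j t x'_i x'_j x'_other[of k]
      by (cases "k = i"; cases "k = j") auto
  qed
  then have "SR_adj m n x x'"
    using xv x'v ij by (simp add: SR_adj_iff_card_mismatch)
  moreover have "mismatch m x' y \<subset> mismatch m x y"
  proof
    show "mismatch m x' y \<subseteq> mismatch m x y"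
    proof
      show "k \<in> mismatch m x y" if "k \<in> mismatch m x' y" for k
        using that i j t x'_i x'_j x'_other[of k] unfolding mismatch_def
        by (cases "k = i"; cases "k = j") auto
    qed
    \<comment> \<open>the choice of t makes x'_i = y_i or x'_j = y_j\<close>
    have "i \<notin> mismatch m x' y \<or> j \<notin> mismatch m x' y"
      unfolding mismatch_def using i j x'_i x'_j unfolding t_def by (auto simp: min_def)
    moreover have "i \<in> mismatch m x y" "j \<in> mismatch m x y"
      unfolding mismatch_def using i j by auto
    ultimately show "mismatch m x' y \<noteq> mismatch m x y" by blast
  qed
  then have "card (mismatch m x' y) < card (mismatch m x y)"
    by (simp add: psubset_card_mono)
  moreover have "excess m x' y < excess m x y"
    unfolding excess_def
  proof (rule sum_strict_mono_ex1)
    have "x' ! k - y ! k \<le> x ! k - y ! k" for k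
      using i t x'_i x'_j x'_other[of k] by (cases "k = i"; cases "k = j") auto
    then show "\<forall>k\<in>{..<m}. x' ! k - y ! k \<le> x ! k - y ! k" by simp
    show "\<exists>k\<in>{..<m}. x' ! k - y ! k < x ! k - y ! k"
      using j t x'_j by (intro bexI[of _ j]) auto
  qed simp
  ultimately show thesis using that by blast
qed

lemma SR_walk_bounded:
  assumes "x \<in> SR_verts m n" "y \<in> SR_verts m n"
  obtains k where "(SR_adj m n ^^ k) x y"
    "k \<le> card (mismatch m x y) - 1" "k \<le> excess m x y"
  using assms
proof (induction "card (mismatch m x y)" arbitrary: x thesis rule: less_induct)
  case less
  show ?case
  proof (cases "x = y")
    case True
    then show ?thesis using less.prems(1)[of 0] by simp
  next
    case False
    then obtain x' where adj: "SR_adj m n x x'" and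
      D: "card (mismatch m x' y) < card (mismatch m x y)" and E: "excess m x' y < excess m x y"
      using SR_adj_towards less.prems(2,3) by blast
    have x'v: "x' \<in> SR_verts m n"
      using adj SR_adj_def by blast
    obtain k where k: "(SR_adj m n ^^ k) x' y"
      "k \<le> card (mismatch m x' y) - 1" "k \<le> excess m x' y"
      using less.hyps[OF D _ x'v less.prems(3)] by blast
    have "Suc k \<le> card (mismatch m x y) - 1"
    proof (cases "x' = y")
      case True
      then show ?thesis using adj k(2) by (simp add: SR_adj_iff_card_mismatch)
    next
      case False
      then have "mismatch m x' y \<noteq> {}"
        using x'v less.prems(3) by (simp add: mismatch_eq_empty_iff SR_verts_def)
      then have "0 < card (mismatch m x' y)"
        by (simp add: card_gt_0_iff)
      then show ?thesis using k(2) D by linarith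
    qed
    moreover have "Suc k \<le> excess m x y"
      using k(3) E by linarith
    ultimately show ?thesis
      using less.prems(1) relpowp_Suc_I2[OF adj k(1)] by blast
  qed
qed

lemma SR_dist_le_walk: "(SR_adj m n ^^ k) x y \<Longrightarrow> SR_dist m n x y \<le> enat k"
  unfolding SR_dist_def by (rule INF_lower) simp

lemma SR_dist_ge:
  "(\<And>k. (SR_adj m n ^^ k) x y \<Longrightarrow> d \<le> k) \<Longrightarrow> enat d \<le> SR_dist m n x y"
  unfolding SR_dist_def by (rule INF_greatest) simp

lemma SR_dist_le_min:
  assumes "x \<in> SR_verts m n" "y \<in> SR_verts m n"
  shows "SR_dist m n x y \<le> enat (min (m - 1) n)"
proof -
  obtain k where walk: "(SR_adj m n ^^ k) x y"
    and "k \<le> card (mismatch m x y) - 1" "k \<le> excess m x y"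
    using SR_walk_bounded assms by blast
  moreover have "card (mismatch m x y) \<le> m" "excess m x y \<le> n"
    using card_mismatch_le excess_le assms(1) by auto
  ultimately have "k \<le> min (m - 1) n"
    by linarith
  then show ?thesis
    using SR_dist_le_walk[OF walk] order.trans by fastforce
qed

lemma SR_adj_card_nonzeros:
  assumes "SR_adj m n z w" "A \<subseteq> {..<m}"
  shows "card (nonzeros A w) \<le> card (nonzeros A z) + 1"
proof -
  let ?C = "mismatch m z w" and ?N = "nonzeros A w - nonzeros A z"
  have C2: "card ?C = 2" and zv: "z \<in> SR_verts m n" and wv: "w \<in> SR_verts m n"
    using assms(1) by (auto simp: SR_adj_iff_card_mismatch)
  have fin: "finite (nonzeros A u)" for u
    using assms(2) finite_subset unfolding nonzeros_def by fastforce
  have new: "?N \<subseteq> ?C"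
    using assms(2) unfolding nonzeros_def mismatch_def by auto
  \<comment> \<open>if both changed entries of z were 0, w would dominate z and have a larger sum\<close>
  have "card ?N \<le> 1"
  proof (rule ccontr)
    assume "\<not> ?thesis"
    then have eq: "?N = ?C"
      using card_seteq[OF finite_mismatch new] C2 by simp
    have "(\<Sum>i<m. z ! i) < (\<Sum>i<m. w ! i)"
    proof (rule sum_strict_mono_ex1)
      have "z ! i \<le> w ! i" if "i < m" for i
      proof (cases "i \<in> ?C")
        case True
        then have "i \<in> ?N" using eq by simp
        then show ?thesis unfolding nonzeros_def by auto
      qed (use that in \<open>auto simp: mismatch_def\<close>)
      then show "\<forall>i\<in>{..<m}. z ! i \<le> w ! i" by simp
      obtain a where "a \<in> ?C"
        using C2 by (metis card.empty ex_in_conv zero_neq_numeral)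
      moreover from this have "a \<in> ?N" using eq by simp
      ultimately show "\<exists>i\<in>{..<m}. z ! i < w ! i"
        unfolding nonzeros_def mismatch_def by (auto intro!: bexI[of _ a])
    qed simp
    then show False using SR_verts_sum_nth[OF zv] SR_verts_sum_nth[OF wv] by simp
  qed
  have "card (nonzeros A w) \<le> card (nonzeros A z \<union> ?N)"
    using fin by (intro card_mono) auto
  also have "\<dots> \<le> card (nonzeros A z) + card ?N"
    by (rule card_Un_le)
  finally show ?thesis using \<open>card ?N \<le> 1\<close> by simp
qed

lemma SR_walk_card_nonzeros:
  assumes "(SR_adj m n ^^ k) z w" "A \<subseteq> {..<m}"
  shows "card (nonzeros A w) \<le> card (nonzeros A z) + k"
  using assms(1)
proof (induction k arbitrary: w)
  case (Suc k)
  from Suc.prems obtain u where "(SR_adj m n ^^ k) z u" "SR_adj m n u w"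
    by (rule relpowp_Suc_E)
  with Suc.IH SR_adj_card_nonzeros[OF _ assms(2)]
  have "card (nonzeros A w) \<le> card (nonzeros A z) + k + 1"
    by (meson add_right_mono order.trans)
  then show ?case by simp
qed simp

lemma corner_in_SR_verts: "n # replicate m 0 \<in> SR_verts (Suc m) n"
  unfolding SR_verts_def by simp

lemma spread_in_SR_verts:
  "K \<le> m \<Longrightarrow> K \<le> n \<Longrightarrow> (n - K) # replicate K 1 @ replicate (m - K) 0 \<in> SR_verts (Suc m) n"
  unfolding SR_verts_def by (simp add: sum_list_replicate)

lemma nth_spread_eq_0_iff:
  assumes "K \<le> m" "1 \<le> i" "i < Suc m"
  shows "((n - K) # replicate K 1 @ replicate (m - K) 0) ! i = 0 \<longleftrightarrow> K < i"
proof -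
  obtain i' where "i = Suc i'" "i' < m"
    using assms by (cases i) auto
  then show ?thesis
    using assms by (simp add: nth_append)
qed

lemma SR_dist_corner_spread:
  assumes "K \<le> m" "K \<le> n"
  shows "enat K \<le> SR_dist (Suc m) n (n # replicate m 0) ((n - K) # replicate K 1 @ replicate (m - K) 0)"
proof (rule SR_dist_ge)
  fix k
  assume walk: "(SR_adj (Suc m) n ^^ k) (n # replicate m 0) ((n - K) # replicate K 1 @ replicate (m - K) 0)"
  have "nonzeros {1..<Suc m} ((n - K) # replicate K 1 @ replicate (m - K) 0) = {1..K}"
  proof (rule set_eqI)
    show "i \<in> nonzeros {1..<Suc m} ((n - K) # replicate K 1 @ replicate (m - K) 0) \<longleftrightarrow>
      i \<in> {1..K}" for i
      using nth_spread_eq_0_iff[OF assms(1), of i] assms(1) unfolding nonzeros_def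
      by (cases "1 \<le> i \<and> i < Suc m") auto
  qed
  moreover have "nonzeros {1..<Suc m} (n # replicate m 0) = {}"
    unfolding nonzeros_def by auto
  moreover have "{1..<Suc m} \<subseteq> {..<Suc m}"
    by auto
  ultimately show "K \<le> k"
    using SR_walk_card_nonzeros[OF walk] by (metis card_atLeastAtMost card.empty add_0 diff_Suc_1)
qed

theorem proposition8:
  fixes m n :: nat
  assumes "m > 0"
  shows "SR_diameter m n = enat (min (m - 1) n)"
proof -
  obtain m' where m: "m = Suc m'" using assms by (cases m) auto
  define K where "K = min m' n"
  have K: "K \<le> m'" "K \<le> n" unfolding K_def by auto
  let ?x = "n # replicate m' 0" and ?y = "(n - K) # replicate K 1 @ replicate (m' - K) 0"
  have "?x \<in> SR_verts m n" "?y \<in> SR_verts m n" "enat K \<le> SR_dist m n ?x ?y"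
    unfolding m using corner_in_SR_verts spread_in_SR_verts[OF K] SR_dist_corner_spread[OF K] .
  then have "enat K \<le> SR_diameter m n"
    unfolding SR_diameter_def by (auto intro!: SUP_upper2[of "(?x, ?y)"])
  moreover have "SR_diameter m n \<le> enat K"
    unfolding SR_diameter_def K_def m using SR_dist_le_min[of _ "Suc m'"]
    by (auto intro!: SUP_least)
  ultimately show ?thesis
    unfolding K_def m by simp
qed

end
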